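(* Let $m\ge4$. If $\mathcal W_1$ is an $m\times m$ quadrilateral labyrinth set in $Q$, then for every $n\ge1$ the set $\mathcal W_n$ of white quadrilaterals of order $n$ is an $m^n\times m^n$ quadrilateral labyrinth set. That is, $\mathcal W_n\subseteq\mathcal S_{m^n}$ and $\mathcal W_n$ satisfies the tree property, the exit property and the corner property with $m$ replaced by $m^n$.
   Context: Let $Q$ be a convex quadrilateral in $\mathbb{R}^2$. Divide $Q$ into two triangles by its shorter diagonal (either diagonal if they have equal length). Label the vertices $Q_1,Q_2,Q_3,Q_4$ anticlockwise, starting at an endpoint of that diagonal, so that the diagonal is $Q_1Q_3$. Let $\Delta_1$ be the closed triangle $Q_1Q_2Q_3$ and $\Delta_2$ the closed triangle $Q_3Q_4Q_1$. Every $x\in Q$ has a unique representation $x=\sum_{i=1}^4\alpha_iQ_i$, defined as follows. If $x\in\Delta_1$, then $\alpha_4=0$ and $(\alpha_1,\alpha_2,\alpha_3)$ are the barycentric coordinates of $x$ in $\Delta_1$. If $x\in\Delta_2$, then $\alpha_2=0$ and $(\alpha_1,\alpha_3,\alpha_4)$ are the barycentric coordinates of $x$ in $\Delta_2$. For an ordered quadruple $V=(V_1,\dots,V_4)$ define $P_V:Q\to\mathbb{R}^2$ by $P_V(x)=\sum_i\alpha_iV_i$. For an integer $m\ge2$, define the following index sets: - $A_1=\{(k_1,k_2,k_3,0)\in\mathbb{Z}_{\ge0}^4:k_1+k_2+k_3=m-1,\ k_2\ne0\}$, - $A_2=\{(k_1,0,k_3,k_4)\in\mathbb{Z}_{\ge0}^4:k_1+k_3+k_4=m-1,\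 k_4\ne0\}$, - $A_3=\{(k_1,0,k_3,0)\in\mathbb{Z}_{\ge0}^4:k_1+k_3=m-1\}$, - $A=A_1\cup A_2\cup A_3$. For $k\in A$, let $S_m(k)$ be the quadrilateral with ordered vertices $R_1R_2R_3R_4$ given below. - If $k\in A_1$: $R_1=\frac{(k_1+1)Q_1+k_2Q_2+k_3Q_3}{m}$, $R_2=\frac{k_1Q_1+(k_2+1)Q_2+k_3Q_3}{m}$, $R_3=\frac{k_1Q_1+k_2Q_2+(k_3+1)Q_3}{m}$, $R_4=\frac{(k_1+1)Q_1+(k_2-1)Q_2+(k_3+1)Q_3}{m}$. - If $k\in A_2$: $R_1=\frac{(k_1+1)Q_1+k_3Q_3+k_4Q_4}{m}$, $R_2=\frac{(k_1+1)Q_1+(k_3+1)Q_3+(k_4-1)Q_4}{m}$, $R_3=\frac{k_1Q_1+(k_3+1)Q_3+k_4Q_4}{m}$, $R_4=\frac{k_1Q_1+k_3Q_3+(k_4+1)Q_4}{m}$. - If $k\in A_3$: $R_1=\frac{(k_1+1)Q_1+k_3Q_3}{m}$, $R_2=\frac{k_1Q_1+Q_2+k_3Q_3}{m}$, $R_3=\frac{k_1Q_1+(k_3+1)Q_3}{m}$, $R_4=\frac{k_1Q_1+k_3Q_3+Q_4}{m}$. Let $\mathcal S_m=\{S_m(k):k\in A\}$. For $\mathcal W\subseteq\mathcal S_m$, the graph $\mathcal G(\mathcal W)$ has vertex set $\mathcal W$, with two elements adjacent iff they have a common side. An $m\times m$ quadrilateral labyrinth set ($m\ge4$) is a set $\mathcal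 W_1\subseteq\mathcal S_m$ satisfying three properties. (1) Tree property: $\mathcal G(\mathcal W_1)$ is a tree. (2) Exit property: there is exactly one $(k_1,k_2,0,0)\in A$ with $S_m(k_1,k_2,0,0)\in\mathcal W_1$ and $S_m(0,0,k_2,k_1)\in\mathcal W_1$. There is also exactly one $(k_1,0,0,k_4)\in A$ with $S_m(k_1,0,0,k_4)\in\mathcal W_1$ and $S_m(0,k_1,k_4,0)\in\mathcal W_1$. (3) Corner property: $\mathcal W_1$ contains at most one element of $\{S_m(m-1,0,0,0),S_m(0,0,m-1,0)\}$ and at most one element of $\{S_m(0,m-1,0,0),S_m(0,0,0,m-1)\}$. Given $\mathcal W_1\subseteq\mathcal S_m$ (the white quadrilaterals of order 1), define recursively for $n\ge2$: $\mathcal W_n=\{P_{W}(W'):W'\in\mathcal W_1,\ W\in\mathcal W_{n-1}\}$. Here $P_W(W')$ is the quadrilateral whose ordered vertices are the images under $P_W$ of the ordered vertices of $W'$. Each $W\in\mathcal W_{n-1}$ is used with its ordered vertices. *)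

theory Defs
  imports "HOL-Analysis.Analysis"
begin

type_synonym pt = "real^2"
type_synonym quad = "pt \<times> pt \<times> pt \<times> pt"

definition cross2 :: "pt \<Rightarrow> pt \<Rightarrow> real" where
  "cross2 u v = u$1 * v$2 - u$2 * v$1"

definition convex_quad_ccw :: "quad \<Rightarrow> bool" where
  "convex_quad_ccw Qv = (case Qv of (Q1,Q2,Q3,Q4) \<Rightarrow>
     cross2 (Q2 - Q1) (Q3 - Q2) > 0 \<and> cross2 (Q3 - Q2) (Q4 - Q3) > 0 \<and>
     cross2 (Q4 - Q3) (Q1 - Q4) > 0 \<and> cross2 (Q1 - Q4) (Q2 - Q1) > 0)"

definition quad_region :: "quad \<Rightarrow> pt set" where
  "quad_region Qv = (case Qv of (Q1,Q2,Q3,Q4) \<Rightarrow> convex hull {Q1,Q2,Q3,Q4})"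

definition comb :: "quad \<Rightarrow> real \<times> real \<times> real \<times> real \<Rightarrow> pt" where
  "comb V a = (case V of (V1,V2,V3,V4) \<Rightarrow> case a of (a1,a2,a3,a4) \<Rightarrow>
     a1 *\<^sub>R V1 + a2 *\<^sub>R V2 + a3 *\<^sub>R V3 + a4 *\<^sub>R V4)"

definition quad_coords :: "quad \<Rightarrow> pt \<Rightarrow> real \<times> real \<times> real \<times> real" where
  "quad_coords Qv x = (case Qv of (Q1,Q2,Q3,Q4) \<Rightarrow>
     if x \<in> convex hull {Q1,Q2,Q3} then
       (THE a. case a of (a1,a2,a3,a4) \<Rightarrow> a4 = 0 \<and> a1 \<ge> 0 \<and> a2 \<ge> 0 \<and> a3 \<ge> 0 \<and>
           a1 + a2 + a3 = 1 \<and> x = comb Qv a)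
     else
       (THE a. case a of (a1,a2,a3,a4) \<Rightarrow> a2 = 0 \<and> a1 \<ge> 0 \<and> a3 \<ge> 0 \<and> a4 \<ge> 0 \<and>
           a1 + a3 + a4 = 1 \<and> x = comb Qv a))"

definition PV :: "quad \<Rightarrow> quad \<Rightarrow> pt \<Rightarrow> pt" where
  "PV Qv V x = comb V (quad_coords Qv x)"

definition quad_map :: "quad \<Rightarrow> quad \<Rightarrow> quad \<Rightarrow> quad" where
  "quad_map Qv W W' = (case W' of (R1,R2,R3,R4) \<Rightarrow>
     (PV Qv W R1, PV Qv W R2, PV Qv W R3, PV Qv W R4))"

type_synonym idx = "nat \<times> nat \<times> nat \<times> nat"

definition A1 :: "nat \<Rightarrow> idx set" where
  "A1 m = {(k1,k2,k3,k4). k4 = 0 \<and> k1 + k2 + k3 = m - 1 \<and> k2 \<noteq> 0}"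
definition A2 :: "nat \<Rightarrow> idx set" where
  "A2 m = {(k1,k2,k3,k4). k2 = 0 \<and> k1 + k3 + k4 = m - 1 \<and> k4 \<noteq> 0}"
definition A3 :: "nat \<Rightarrow> idx set" where
  "A3 m = {(k1,k2,k3,k4). k2 = 0 \<and> k4 = 0 \<and> k1 + k3 = m - 1}"
definition Aidx :: "nat \<Rightarrow> idx set" where
  "Aidx m = A1 m \<union> A2 m \<union> A3 m"

text \<open>The quadrilateral S_m(k) (meaningful for k in A).\<close>
definition Sq :: "quad \<Rightarrow> nat \<Rightarrow> idx \<Rightarrow> quad" where
  "Sq Qv m k = (case k of (k1,k2,k3,k4) \<Rightarrow>
     let r = real m; c1 = real k1; c2 = real k2; c3 = real k3; c4 = real k4 in
     if k \<in> A1 m then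
       (comb Qv ((c1+1)/r, c2/r, c3/r, 0),
        comb Qv (c1/r, (c2+1)/r, c3/r, 0),
        comb Qv (c1/r, c2/r, (c3+1)/r, 0),
        comb Qv ((c1+1)/r, (c2-1)/r, (c3+1)/r, 0))
     else if k \<in> A2 m then
       (comb Qv ((c1+1)/r, 0, c3/r, c4/r),
        comb Qv ((c1+1)/r, 0, (c3+1)/r, (c4-1)/r),
        comb Qv (c1/r, 0, (c3+1)/r, c4/r),
        comb Qv (c1/r, 0, c3/r, (c4+1)/r))
     else
       (comb Qv ((c1+1)/r, 0, c3/r, 0),
        comb Qv (c1/r, 1/r, c3/r, 0),
        comb Qv (c1/r, 0, (c3+1)/r, 0),
        comb Qv (c1/r, 0, c3/r, 1/r)))"

definition Sset :: "quad \<Rightarrow> nat \<Rightarrow> quad set" where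
  "Sset Qv m = Sq Qv m ` Aidx m"

definition sides :: "quad \<Rightarrow> pt set set" where
  "sides R = (case R of (R1,R2,R3,R4) \<Rightarrow>
     {closed_segment R1 R2, closed_segment R2 R3, closed_segment R3 R4, closed_segment R4 R1})"

definition adj :: "quad \<Rightarrow> quad \<Rightarrow> bool" where
  "adj U V = (U \<noteq> V \<and> sides U \<inter> sides V \<noteq> {})"

definition graph_connected :: "quad set \<Rightarrow> bool" where
  "graph_connected W = (\<forall>U\<in>W. \<forall>V\<in>W.
     (U, V) \<in> ({(X, Y). X \<in> W \<and> Y \<in> W \<and> adj X Y})\<^sup>*)"

definition has_cycle :: "quad set \<Rightarrow> bool" where
  "has_cycle W = (\<exists>cs. length cs \<ge> 3 \<and> distinct cs \<and> set cs \<subseteq> W \<and>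
     (\<forall>i < length cs - 1. adj (cs ! i) (cs ! Suc i)) \<and> adj (last cs) (hd cs))"

definition is_tree :: "quad set \<Rightarrow> bool" where
  "is_tree W = (finite W \<and> W \<noteq> {} \<and> graph_connected W \<and> \<not> has_cycle W)"

definition exit_property :: "quad \<Rightarrow> nat \<Rightarrow> quad set \<Rightarrow> bool" where
  "exit_property Qv m W =
    ((\<exists>!p. case p of (k1, k2) \<Rightarrow> (k1,k2,0,0) \<in> Aidx m \<and>
        Sq Qv m (k1,k2,0,0) \<in> W \<and> Sq Qv m (0,0,k2,k1) \<in> W) \<and>
     (\<exists>!p. case p of (k1, k4) \<Rightarrow> (k1,0,0,k4) \<in> Aidx m \<and>
        Sq Qv m (k1,0,0,k4) \<in> W \<and> Sq Qv m (0,k1,k4,0) \<in> W))"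

definition corner_property :: "quad \<Rightarrow> nat \<Rightarrow> quad set \<Rightarrow> bool" where
  "corner_property Qv m W =
    (\<not> (Sq Qv m (m-1,0,0,0) \<in> W \<and> Sq Qv m (0,0,m-1,0) \<in> W) \<and>
     \<not> (Sq Qv m (0,m-1,0,0) \<in> W \<and> Sq Qv m (0,0,0,m-1) \<in> W))"

definition labyrinth_set :: "quad \<Rightarrow> nat \<Rightarrow> quad set \<Rightarrow> bool" where
  "labyrinth_set Qv m W = (m \<ge> 4 \<and> W \<subseteq> Sset Qv m \<and> is_tree W \<and>
     exit_property Qv m W \<and> corner_property Qv m W)"

text \<open>white_aux Qv W1 j = W_(j+1).\<close>
primrec white_aux :: "quad \<Rightarrow> quad set \<Rightarrow> nat \<Rightarrow> quad set" where
  "white_aux Qv W1 0 = W1"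
| "white_aux Qv W1 (Suc j) = {quad_map Qv W W' | W W'. W' \<in> W1 \<and> W \<in> white_aux Qv W1 j}"

definition white :: "quad \<Rightarrow> quad set \<Rightarrow> nat \<Rightarrow> quad set" where
  "white Qv W1 n = white_aux Qv W1 (n - 1)"

end

theory Submission
  imports Defs
begin

text \<open>
  The quadrilaterals \<open>S_M(k)\<close> are the images of the cells \<open>(k2 + k3, k3 + k4)\<close> of an
  \<open>M \<times> M\<close> grid under a piecewise affine chart of \<open>[0, M]\<^sup>2\<close> onto \<open>Q\<close>. Under this
  correspondence quadrilaterals with a common side are neighbouring grid cells, the exit and corner
  properties are conditions on the boundary rows and columns of the grid, and \<open>P\<^sub>W\<close> for the
  quadrilateral \<open>W\<close> of cell \<open>d\<close> maps the quadrilateral of cell \<open>c\<close> of the \<open>m \<times> m\<close> grid to that of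
  cell \<open>m d + c\<close> of the \<open>M m \<times> M m\<close> grid. So \<open>W\<^sub>n\<close> corresponds to the pattern obtained by
  substituting the pattern of \<open>W\<^sub>1\<close> into every cell of the pattern of \<open>W\<^sub>n\<^sub>-\<^sub>1\<close>, and it
  suffices to show that such a substitution of grid labyrinths is again a grid labyrinth.

  The blocks of the substituted pattern are trees, and the unique exits make neighbouring blocks
  joined by exactly one edge. Hence the pattern is connected, and a cycle either stays in one
  block or, projected to the blocks, yields a cycle of the coarse pattern. Its exits and corners
  are read off in the digits of the coordinates in base \<open>m\<close>.
\<close>

section \<open>Graphs given by an adjacency relation\<close>

abbreviation edges_in :: "('a \<Rightarrow> 'a \<Rightarrow> bool) \<Rightarrow> 'a set \<Rightarrow> ('a \<times> 'a) set" where
  "edges_in R V \<equiv> {(x, y). x \<in> V \<and> y \<in> V \<and> R x y}"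

definition connected_in :: "('a \<Rightarrow> 'a \<Rightarrow> bool) \<Rightarrow> 'a set \<Rightarrow> bool" where
  "connected_in R V \<longleftrightarrow> (\<forall>u\<in>V. \<forall>v\<in>V. (u, v) \<in> (edges_in R V)\<^sup>*)"

definition is_cycle :: "('a \<Rightarrow> 'a \<Rightarrow> bool) \<Rightarrow> 'a set \<Rightarrow> 'a list \<Rightarrow> bool" where
  "is_cycle R V cs \<longleftrightarrow> 3 \<le> length cs \<and> distinct cs \<and> set cs \<subseteq> V \<and>
     successively R cs \<and> R (last cs) (hd cs)"

definition has_cycle_in :: "('a \<Rightarrow> 'a \<Rightarrow> bool) \<Rightarrow> 'a set \<Rightarrow> bool" where
  "has_cycle_in R V \<longleftrightarrow> (\<exists>cs. is_cycle R V cs)"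

lemma graph_connected_iff: "graph_connected W \<longleftrightarrow> connected_in adj W"
  unfolding graph_connected_def connected_in_def ..

lemma has_cycle_iff: "has_cycle W \<longleftrightarrow> has_cycle_in adj W"
proof -
  have "successively adj cs \<longleftrightarrow> (\<forall>i < length cs - 1. adj (cs ! i) (cs ! Suc i))" for cs
    by (auto simp: successively_conv_nth)
  then show ?thesis by (simp add: has_cycle_def has_cycle_in_def is_cycle_def)
qed

lemma connected_in_image:
  assumes "connected_in R V" and "\<And>x y. x \<in> V \<Longrightarrow> y \<in> V \<Longrightarrow> R x y \<Longrightarrow> A (f x) (f y)"
  shows "connected_in A (f ` V)"
proof -
  have "(f u, f v) \<in> (edges_in A (f ` V))\<^sup>*" if "(u, v) \<in> (edges_in R V)\<^sup>*" for u v
    using that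
  proof (induction rule: rtrancl_induct)
    case (step v w)
    then have "(f v, f w) \<in> edges_in A (f ` V)" using assms(2) by auto
    with step.IH show ?case by (rule rtrancl_into_rtrancl)
  qed simp
  then show ?thesis using assms(1) by (fastforce simp: connected_in_def)
qed

lemma is_cycle_map:
  assumes "is_cycle R V cs" and "inj_on f (set cs)" and "f ` set cs \<subseteq> W"
    and "\<And>x y. x \<in> set cs \<Longrightarrow> y \<in> set cs \<Longrightarrow> R x y \<Longrightarrow> A (f x) (f y)"
  shows "is_cycle A W (map f cs)"
proof -
  have cs: "3 \<le> length cs" "distinct cs" "successively R cs" "R (last cs) (hd cs)"
    using assms(1) by (auto simp: is_cycle_def)
  then have "cs \<noteq> []" by auto
  have "successively (\<lambda>x y. A (f x) (f y)) cs"
    by (rule successively_mono[OF cs(3) assms(4)])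
  moreover have "A (f (last cs)) (f (hd cs))"
    by (rule assms(4)) (use cs(4) \<open>cs \<noteq> []\<close> in auto)
  ultimately show ?thesis
    using cs(1,2) \<open>cs \<noteq> []\<close> assms(2,3)
    by (simp add: is_cycle_def distinct_map successively_map hd_map last_map)
qed

lemma has_cycle_in_image_iff:
  assumes "inj_on f V" and "\<And>x y. x \<in> V \<Longrightarrow> y \<in> V \<Longrightarrow> A (f x) (f y) \<longleftrightarrow> R x y"
  shows "has_cycle_in A (f ` V) \<longleftrightarrow> has_cycle_in R V"
proof
  assume "has_cycle_in A (f ` V)"
  then obtain cs where cs: "is_cycle A (f ` V) cs" by (auto simp: has_cycle_in_def)
  then have sub: "set cs \<subseteq> f ` V" by (simp add: is_cycle_def)
  let ?g = "inv_into V f"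
  have "R (?g x) (?g y)" if "x \<in> set cs" "y \<in> set cs" "A x y" for x y
  proof -
    have "x \<in> f ` V" "y \<in> f ` V" using that sub by auto
    then show ?thesis
      using assms(2)[of "?g x" "?g y"] \<open>A x y\<close> by (simp add: inv_into_into f_inv_into_f)
  qed
  then have "is_cycle R V (map ?g cs)"
    using sub by (intro is_cycle_map[OF cs inj_on_inv_into[OF sub]]) (auto intro: inv_into_into)
  then show "has_cycle_in R V" by (auto simp: has_cycle_in_def)
next
  assume "has_cycle_in R V"
  then obtain cs where cs: "is_cycle R V cs" by (auto simp: has_cycle_in_def)
  then have sub: "set cs \<subseteq> V" by (simp add: is_cycle_def)
  have "is_cycle A (f ` V) (map f cs)"
    using sub assms(2) by (intro is_cycle_map[OF cs inj_on_subset[OF assms(1) sub]]) auto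
  then show "has_cycle_in A (f ` V)" by (auto simp: has_cycle_in_def)
qed

lemma connected_in_image_iff:
  assumes "inj_on f V" and "\<And>x y. x \<in> V \<Longrightarrow> y \<in> V \<Longrightarrow> A (f x) (f y) \<longleftrightarrow> R x y"
  shows "connected_in A (f ` V) \<longleftrightarrow> connected_in R V"
proof
  assume "connected_in A (f ` V)"
  moreover have "R (inv_into V f x) (inv_into V f y)"
    if "x \<in> f ` V" "y \<in> f ` V" "A x y" for x y
    using assms(2)[of "inv_into V f x" "inv_into V f y"] that
    by (simp add: inv_into_into f_inv_into_f)
  ultimately have "connected_in R (inv_into V f ` f ` V)"
    by (rule connected_in_image)
  then show "connected_in R V" using assms(1) by (simp add: inv_into_image_cancel)
qed (use assms(2) in \<open>auto intro: connected_in_image\<close>)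

lemma is_cycle_rotate: "is_cycle R V (xs @ ys) \<Longrightarrow> is_cycle R V (ys @ xs)"
  by (cases "xs = [] \<or> ys = []") (auto simp: is_cycle_def successively_append_iff)

lemma successively_not_hd_last:
  assumes "distinct cs" and "3 \<le> length cs"
  shows "successively (\<lambda>x y. {x, y} \<noteq> {hd cs, last cs}) cs"
proof -
  obtain h t where "cs = h # t" using assms(2) by (cases cs) auto
  moreover obtain mid l where "t = mid @ [l]"
    using assms(2) calculation by (cases t rule: rev_cases) auto
  ultimately have cs: "cs = h # mid @ [l]" and "mid \<noteq> []" using assms(2) by auto
  have dist: "h \<notin> set mid" "l \<notin> set mid" "h \<noteq> l" using assms(1) cs by auto
  have "successively (\<lambda>x y. {x, y} \<noteq> {h, l}) mid"
    using dist by (auto simp: successively_conv_nth doubleton_eq_iff dest: nth_mem)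
  moreover have "{h, hd mid} \<noteq> {h, l}" "{last mid, l} \<noteq> {h, l}"
    using dist \<open>mid \<noteq> []\<close> by (auto simp: doubleton_eq_iff)
  ultimately show ?thesis
    using \<open>mid \<noteq> []\<close> by (simp add: cs successively_append_iff successively_Cons)
qed

text \<open>Cutting out repetitions turns the walk into a path from \<open>a\<close> to \<open>b\<close> with at least two
  edges, which the edge \<open>{a, b}\<close> closes to a cycle.\<close>
lemma walk_avoiding_edge_has_cycle:
  assumes sym: "\<And>x y. R x y \<Longrightarrow> R y x" and "R a b" and "a \<noteq> b"
  shows "ws \<noteq> [] \<Longrightarrow> hd ws = a \<Longrightarrow> last ws = b \<Longrightarrow> set ws \<subseteq> V \<Longrightarrow>
    successively (\<lambda>x y. x = y \<or> R x y \<and> {x, y} \<noteq> {a, b}) ws \<Longrightarrow> has_cycle_in R V"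
proof (induction ws rule: length_induct)
  case (1 ws)
  let ?step = "\<lambda>x y. x = y \<or> R x y \<and> {x, y} \<noteq> {a, b}"
  show ?case
  proof (cases "distinct ws")
    case False
    then obtain xs ys zs y where ws: "ws = xs @ [y] @ ys @ [y] @ zs"
      using not_distinct_decomp by blast
    define ws' where "ws' = xs @ [y] @ zs"
    have "length ws' < length ws" "ws' \<noteq> []" unfolding ws ws'_def by simp_all
    moreover have "hd ws' = a" using "1.prems"(2) unfolding ws ws'_def by (cases xs) auto
    moreover have "last ws' = b" using "1.prems"(3) unfolding ws ws'_def by (cases zs) auto
    moreover have "set ws' \<subseteq> V" using "1.prems"(4) unfolding ws ws'_def by auto
    moreover have "successively ?step ws'"
      using "1.prems"(5) unfolding ws ws'_def
      by (auto simp: successively_append_iff successively_Cons split: if_splits)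
    ultimately show ?thesis using "1.IH" by blast
  next
    case True
    have steps: "successively (\<lambda>x y. R x y \<and> {x, y} \<noteq> {a, b}) ws"
      using "1.prems"(5) True by (induction ?step ws rule: successively.induct) auto
    have "length ws \<noteq> 0" "length ws \<noteq> 1" using "1.prems" \<open>a \<noteq> b\<close> by (cases ws; auto)+
    moreover have "length ws \<noteq> 2"
    proof
      assume "length ws = 2"
      then obtain x y where "ws = [x, y]"
        by (metis One_nat_def Suc_1 length_0_conv length_Suc_conv)
      then show False using steps "1.prems" by auto
    qed
    ultimately have "3 \<le> length ws" by linarith
    moreover have "successively R ws" using successively_mono[OF steps] by blast
    ultimately have "is_cycle R V ws"
      using True "1.prems" sym[OF \<open>R a b\<close>] by (auto simp: is_cycle_def)
    then show ?thesis by (auto simp: has_cycle_in_def)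
  qed
qed

lemma list_split_at_change:
  assumes "\<exists>x\<in>set xs. f x \<noteq> f (hd xs)"
  obtains ys zs where "xs = ys @ zs" "ys \<noteq> []" "zs \<noteq> []" "f (last ys) \<noteq> f (hd zs)"
proof -
  let ?same = "\<lambda>y. f y = f (hd xs)"
  have "xs \<noteq> []" using assms by auto
  then have "takeWhile ?same xs \<noteq> []" by (cases xs) auto
  moreover have "dropWhile ?same xs \<noteq> []" using assms by (simp add: dropWhile_eq_Nil_conv)
  moreover have "?same (last (takeWhile ?same xs))"
    using calculation(1) by (meson last_in_set set_takeWhileD)
  moreover have "\<not> ?same (hd (dropWhile ?same xs))"
    using calculation(2) by (rule hd_dropWhile)
  ultimately show ?thesis using that[of "takeWhile ?same xs" "dropWhile ?same xs"] by simp
qed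

section \<open>Grid labyrinths\<close>

type_synonym cell = "nat \<times> nat"

definition grid :: "nat \<Rightarrow> cell set" where
  "grid M = {..<M} \<times> {..<M}"

definition grid_adj :: "cell \<Rightarrow> cell \<Rightarrow> bool" where
  "grid_adj p q \<longleftrightarrow>
     fst p = fst q \<and> (snd p = Suc (snd q) \<or> snd q = Suc (snd p)) \<or>
     snd p = snd q \<and> (fst p = Suc (fst q) \<or> fst q = Suc (fst p))"

lemma grid_adj_sym: "grid_adj p q \<Longrightarrow> grid_adj q p"
  by (auto simp: grid_adj_def)

lemma grid_adj_irrefl: "\<not> grid_adj p p"
  by (auto simp: grid_adj_def)

definition grid_tree :: "cell set \<Rightarrow> bool" where
  "grid_tree C \<longleftrightarrow> finite C \<and> C \<noteq> {} \<and> connected_in grid_adj C \<and> \<not> has_cycle_in grid_adj C"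

definition vertical_exit :: "nat \<Rightarrow> cell set \<Rightarrow> nat \<Rightarrow> bool" where
  "vertical_exit M C x \<longleftrightarrow> (x, 0) \<in> C \<and> (x, M - 1) \<in> C"

definition horizontal_exit :: "nat \<Rightarrow> cell set \<Rightarrow> nat \<Rightarrow> bool" where
  "horizontal_exit M C y \<longleftrightarrow> (0, y) \<in> C \<and> (M - 1, y) \<in> C"

definition grid_labyrinth :: "nat \<Rightarrow> cell set \<Rightarrow> bool" where
  "grid_labyrinth M C \<longleftrightarrow> 4 \<le> M \<and> C \<subseteq> grid M \<and> grid_tree C \<and>
     (\<exists>!x. vertical_exit M C x) \<and> (\<exists>!y. horizontal_exit M C y) \<and>
     \<not> ((0, 0) \<in> C \<and> (M - 1, M - 1) \<in> C) \<and> \<not> ((M - 1, 0) \<in> C \<and> (0, M - 1) \<in> C)"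

lemma grid_labyrinth_pos: "grid_labyrinth M C \<Longrightarrow> 0 < M"
  by (simp add: grid_labyrinth_def)

lemma grid_labyrinth_subset: "grid_labyrinth M C \<Longrightarrow> C \<subseteq> grid M"
  by (simp add: grid_labyrinth_def)

lemma grid_labyrinth_tree: "grid_labyrinth M C \<Longrightarrow> grid_tree C"
  by (simp add: grid_labyrinth_def)

section \<open>Substituting one grid labyrinth into another\<close>

lemma mult_add_eq_mult_add_iff:
  fixes m d d' c c' :: nat
  assumes "c < m" and "c' < m"
  shows "m * d + c = m * d' + c' \<longleftrightarrow> d = d' \<and> c = c'"
proof
  assume eq: "m * d + c = m * d' + c'"
  have "(m * d + c) div m = d" "(m * d + c) mod m = c"
    "(m * d' + c') div m = d'" "(m * d' + c') mod m = c'"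
    using assms by auto
  then show "d = d' \<and> c = c'" using eq by metis
qed auto

lemma mult_add_eq_Suc_mult_add_iff:
  fixes m d d' c c' :: nat
  assumes "c < m" and "c' < m"
  shows "m * d + c = Suc (m * d' + c') \<longleftrightarrow>
    d = d' \<and> c = Suc c' \<or> d = Suc d' \<and> c = 0 \<and> c' = m - 1"
proof (cases "Suc c' < m")
  case True
  then show ?thesis
    using mult_add_eq_mult_add_iff[OF assms(1) True, of d d'] by auto
next
  case False
  then have "c' = m - 1" "Suc (m * d' + c') = m * Suc d' + 0"
    using assms(2) by auto
  then show ?thesis
    using mult_add_eq_mult_add_iff[OF assms(1), of 0 d "Suc d'"] assms by auto
qed

lemma pred_mult_div_mod:
  fixes m M :: nat
  assumes "0 < m" and "0 < M"
  shows "(M * m - 1) div m = M - 1" and "(M * m - 1) mod m = m - 1"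
proof -
  obtain m' M' where m: "m = Suc m'" and M: "M = Suc M'"
    using assms not0_implies_Suc by blast
  have "M * m - 1 = m' + M' * m" using m M by simp
  moreover have "m' < m" "M - 1 = M'" "m - 1 = m'" using m M by simp_all
  ultimately show "(M * m - 1) div m = M - 1" "(M * m - 1) mod m = m - 1"
    using assms(1) by simp_all
qed

lemma Ex1_div_mod:
  fixes m :: nat
  assumes "\<exists>!d. P d" and "\<exists>!c. Q c" and "\<And>c. Q c \<Longrightarrow> c < m"
  shows "\<exists>!x. P (x div m) \<and> Q (x mod m)"
proof -
  obtain d c where "P d" "Q c" and uniq: "\<And>d'. P d' \<Longrightarrow> d' = d" "\<And>c'. Q c' \<Longrightarrow> c' = c"
    using assms(1,2) by blast
  have "c < m" using assms(3) \<open>Q c\<close> .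
  show ?thesis
  proof (rule ex1I[of _ "m * d + c"])
    show "P ((m * d + c) div m) \<and> Q ((m * d + c) mod m)"
      using \<open>P d\<close> \<open>Q c\<close> \<open>c < m\<close> by simp
    show "x = m * d + c" if "P (x div m) \<and> Q (x mod m)" for x
      using that uniq div_mult_mod_eq[of x m] by (metis add.commute mult.commute)
  qed
qed

definition subcell :: "nat \<Rightarrow> cell \<Rightarrow> cell \<Rightarrow> cell" where
  "subcell m d c = (m * fst d + fst c, m * snd d + snd c)"

definition grid_subst :: "nat \<Rightarrow> cell set \<Rightarrow> cell set \<Rightarrow> cell set" where
  "grid_subst m D C = {subcell m d c | d c. d \<in> D \<and> c \<in> C}"

lemma grid_subst_eq_image: "grid_subst m D C = (\<lambda>(d, c). subcell m d c) ` (D \<times> C)"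
  by (auto simp: grid_subst_def)

lemma subcell_in_grid_subst: "d \<in> D \<Longrightarrow> c \<in> C \<Longrightarrow> subcell m d c \<in> grid_subst m D C"
  unfolding grid_subst_def by blast

definition cell_block :: "nat \<Rightarrow> cell \<Rightarrow> cell" where
  "cell_block m e = (fst e div m, snd e div m)"

definition cell_offset :: "nat \<Rightarrow> cell \<Rightarrow> cell" where
  "cell_offset m e = (fst e mod m, snd e mod m)"

lemma cell_block_subcell: "c \<in> grid m \<Longrightarrow> cell_block m (subcell m d c) = d"
  by (auto simp: cell_block_def subcell_def grid_def)

lemma cell_offset_subcell: "c \<in> grid m \<Longrightarrow> cell_offset m (subcell m d c) = c"
  by (auto simp: cell_offset_def subcell_def grid_def)

lemma subcell_block_offset: "subcell m (cell_block m e) (cell_offset m e) = e"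
  by (simp add: subcell_def cell_block_def cell_offset_def)

lemma cell_offset_in_grid: "0 < m \<Longrightarrow> cell_offset m e \<in> grid m"
  by (simp add: cell_offset_def grid_def)

lemma mem_grid_subst_iff:
  assumes "C \<subseteq> grid m"
  shows "e \<in> grid_subst m D C \<longleftrightarrow> cell_block m e \<in> D \<and> cell_offset m e \<in> C"
proof
  assume "cell_block m e \<in> D \<and> cell_offset m e \<in> C"
  then show "e \<in> grid_subst m D C"
    unfolding grid_subst_def using subcell_block_offset[of m e, symmetric] by blast
qed (use assms cell_block_subcell cell_offset_subcell in \<open>auto simp: grid_subst_def\<close>)

lemma grid_subst_subset_grid:
  assumes "D \<subseteq> grid M" and "C \<subseteq> grid m"
  shows "grid_subst m D C \<subseteq> grid (M * m)"
proof
  fix e assume "e \<in> grid_subst m D C"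
  then have "cell_block m e \<in> grid M" "cell_offset m e \<in> grid m"
    using assms mem_grid_subst_iff by blast+
  then have "fst e div m < M" "snd e div m < M" "0 < m"
    by (auto simp: cell_block_def cell_offset_def grid_def)
  then show "e \<in> grid (M * m)"
    by (simp add: grid_def div_less_iff_less_mult mult.commute mem_Times_iff)
qed

text \<open>\<open>subcell m d c\<close> and \<open>subcell m d' c'\<close> are adjacent across the common side of the
  neighbouring blocks \<open>d\<close> and \<open>d'\<close>.\<close>
definition cross_adj :: "nat \<Rightarrow> cell \<Rightarrow> cell \<Rightarrow> cell \<Rightarrow> cell \<Rightarrow> bool" where
  "cross_adj m d c d' c' \<longleftrightarrow>
     snd d = snd d' \<and> snd c = snd c' \<and>
       (fst d = Suc (fst d') \<and> fst c = 0 \<and> fst c' = m - 1 \<or>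
        fst d' = Suc (fst d) \<and> fst c' = 0 \<and> fst c = m - 1) \<or>
     fst d = fst d' \<and> fst c = fst c' \<and>
       (snd d = Suc (snd d') \<and> snd c = 0 \<and> snd c' = m - 1 \<or>
        snd d' = Suc (snd d) \<and> snd c' = 0 \<and> snd c = m - 1)"

lemma cross_adj_grid_adj: "cross_adj m d c d' c' \<Longrightarrow> grid_adj d d'"
  by (auto simp: cross_adj_def grid_adj_def)

lemma grid_adj_subcell_iff:
  assumes "c \<in> grid m" and "c' \<in> grid m"
  shows "grid_adj (subcell m d c) (subcell m d' c') \<longleftrightarrow>
    d = d' \<and> grid_adj c c' \<or> cross_adj m d c d' c'"
proof -
  obtain a b a' b' where c: "c = (a, b)" "c' = (a', b')" by fastforce
  have "a < m" "b < m" "a' < m" "b' < m" using assms c by (auto simp: grid_def)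
  note eq = mult_add_eq_mult_add_iff[OF \<open>a < m\<close> \<open>a' < m\<close>]
      mult_add_eq_mult_add_iff[OF \<open>b < m\<close> \<open>b' < m\<close>]
    and suc = mult_add_eq_Suc_mult_add_iff[OF \<open>a < m\<close> \<open>a' < m\<close>]
      mult_add_eq_Suc_mult_add_iff[OF \<open>a' < m\<close> \<open>a < m\<close>]
      mult_add_eq_Suc_mult_add_iff[OF \<open>b < m\<close> \<open>b' < m\<close>]
      mult_add_eq_Suc_mult_add_iff[OF \<open>b' < m\<close> \<open>b < m\<close>]
  show ?thesis
    unfolding c subcell_def grid_adj_def cross_adj_def using eq suc
    by (cases d; cases d') auto
qed

lemma grid_adj_block_cases:
  assumes "0 < m" and "grid_adj e e'"
  shows "cell_block m e = cell_block m e' \<and> grid_adj (cell_offset m e) (cell_offset m e') \<or>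
    cross_adj m (cell_block m e) (cell_offset m e) (cell_block m e') (cell_offset m e')"
  using assms grid_adj_subcell_iff[OF cell_offset_in_grid cell_offset_in_grid]
  by (metis subcell_block_offset)

context
  fixes m :: nat and C :: "cell set"
  assumes C: "grid_labyrinth m C"
begin

lemma cross_adj_exists:
  assumes "grid_adj d d'"
  shows "\<exists>c\<in>C. \<exists>c'\<in>C. cross_adj m d c d' c'"
proof -
  obtain x y where x: "(x, 0) \<in> C" "(x, m - 1) \<in> C" and y: "(0, y) \<in> C" "(m - 1, y) \<in> C"
    using C by (auto simp: grid_labyrinth_def vertical_exit_def horizontal_exit_def)
  show ?thesis
    using assms unfolding grid_adj_def
  proof (elim disjE conjE)
    assume "fst d = fst d'" "snd d = Suc (snd d')"
    then show ?thesis
      using x by (intro bexI[of _ "(x, 0)"] bexI[of _ "(x, m - 1)"]) (auto simp: cross_adj_def)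
  next
    assume "fst d = fst d'" "snd d' = Suc (snd d)"
    then show ?thesis
      using x by (intro bexI[of _ "(x, m - 1)"] bexI[of _ "(x, 0)"]) (auto simp: cross_adj_def)
  next
    assume "snd d = snd d'" "fst d = Suc (fst d')"
    then show ?thesis
      using y by (intro bexI[of _ "(0, y)"] bexI[of _ "(m - 1, y)"]) (auto simp: cross_adj_def)
  next
    assume "snd d = snd d'" "fst d' = Suc (fst d)"
    then show ?thesis
      using y by (intro bexI[of _ "(m - 1, y)"] bexI[of _ "(0, y)"]) (auto simp: cross_adj_def)
  qed
qed

lemma cross_adj_unique:
  assumes "cross_adj m d c1 d' c2" and "cross_adj m d c1' d' c2'"
    and "c1 \<in> C" "c2 \<in> C" "c1' \<in> C" "c2' \<in> C"
  shows "c1 = c1' \<and> c2 = c2'"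
proof -
  have vx: "x = x'" if "vertical_exit m C x" "vertical_exit m C x'" for x x'
    using C that by (auto simp: grid_labyrinth_def)
  have hy: "y = y'" if "horizontal_exit m C y" "horizontal_exit m C y'" for y y'
    using C that by (auto simp: grid_labyrinth_def)
  show ?thesis
    using assms vx[of "fst c1" "fst c1'"] vx[of "fst c2" "fst c2'"]
      hy[of "snd c1" "snd c1'"] hy[of "snd c2" "snd c2'"]
    unfolding cross_adj_def vertical_exit_def horizontal_exit_def
    by (cases c1; cases c2; cases c1'; cases c2') auto
qed

end

lemma vertical_exit_grid_subst_iff:
  assumes "C \<subseteq> grid m" and "0 < m" "0 < M"
  shows "vertical_exit (M * m) (grid_subst m D C) x \<longleftrightarrow>
    vertical_exit M D (x div m) \<and> vertical_exit m C (x mod m)"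
  using pred_mult_div_mod[OF assms(2,3)]
  by (auto simp: vertical_exit_def mem_grid_subst_iff[OF assms(1)] cell_block_def cell_offset_def)

lemma horizontal_exit_grid_subst_iff:
  assumes "C \<subseteq> grid m" and "0 < m" "0 < M"
  shows "horizontal_exit (M * m) (grid_subst m D C) y \<longleftrightarrow>
    horizontal_exit M D (y div m) \<and> horizontal_exit m C (y mod m)"
  using pred_mult_div_mod[OF assms(2,3)]
  by (auto simp: horizontal_exit_def mem_grid_subst_iff[OF assms(1)] cell_block_def cell_offset_def)

context
  fixes m M :: nat and C D :: "cell set"
  assumes C: "grid_labyrinth m C" and D: "grid_labyrinth M D"
begin

lemma grid_subst_memD: "e \<in> grid_subst m D C \<Longrightarrow> cell_block m e \<in> D \<and> cell_offset m e \<in> C"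
  using mem_grid_subst_iff[OF grid_labyrinth_subset[OF C]] by blast

lemma subcell_path_in_grid_subst:
  assumes "d \<in> D" and "(c, c') \<in> (edges_in grid_adj C)\<^sup>*"
  shows "(subcell m d c, subcell m d c') \<in> (edges_in grid_adj (grid_subst m D C))\<^sup>*"
  using assms(2)
proof (induction rule: rtrancl_induct)
  case (step c' c'')
  then have "grid_adj (subcell m d c') (subcell m d c'')"
    using grid_adj_subcell_iff grid_labyrinth_subset[OF C] by blast
  then have "(subcell m d c', subcell m d c'') \<in> edges_in grid_adj (grid_subst m D C)"
    using step(2) subcell_in_grid_subst[OF assms(1)] by auto
  with step.IH show ?case by (rule rtrancl_into_rtrancl)
qed simp

lemma connected_in_grid_subst: "connected_in grid_adj (grid_subst m D C)"
proof -
  have C_conn: "(c, c') \<in> (edges_in grid_adj C)\<^sup>*" if "c \<in> C" "c' \<in> C" for c c'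
    using grid_labyrinth_tree[OF C] that by (auto simp: grid_tree_def connected_in_def)
  have "(subcell m d c, subcell m d' c') \<in> (edges_in grid_adj (grid_subst m D C))\<^sup>*"
    if "(d, d') \<in> (edges_in grid_adj D)\<^sup>*" "d \<in> D" "c \<in> C" "c' \<in> C" for d d' c c'
    using that(1,4)
  proof (induction arbitrary: c' rule: rtrancl_induct)
    case base
    then show ?case using subcell_path_in_grid_subst[OF that(2) C_conn] that(3) by blast
  next
    case (step d' d'')
    then have "d' \<in> D" "d'' \<in> D" "grid_adj d' d''" by auto
    then obtain c1 c2 where c12: "c1 \<in> C" "c2 \<in> C" "cross_adj m d' c1 d'' c2"
      using cross_adj_exists[OF C] by blast
    then have "grid_adj (subcell m d' c1) (subcell m d'' c2)"
      using grid_adj_subcell_iff grid_labyrinth_subset[OF C] by blast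
    then have "(subcell m d' c1, subcell m d'' c2) \<in> edges_in grid_adj (grid_subst m D C)"
      using c12 subcell_in_grid_subst[OF \<open>d' \<in> D\<close>] subcell_in_grid_subst[OF \<open>d'' \<in> D\<close>]
      by auto
    moreover have "(subcell m d'' c2, subcell m d'' c') \<in> (edges_in grid_adj (grid_subst m D C))\<^sup>*"
      using subcell_path_in_grid_subst[OF \<open>d'' \<in> D\<close> C_conn] c12(2) step.prems by blast
    ultimately show ?case
      using step.IH[OF c12(1)] by (meson converse_rtrancl_into_rtrancl rtrancl_trans)
  qed
  moreover have "(d, d') \<in> (edges_in grid_adj D)\<^sup>*" if "d \<in> D" "d' \<in> D" for d d'
    using grid_labyrinth_tree[OF D] that by (auto simp: grid_tree_def connected_in_def)
  ultimately show ?thesis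
    unfolding connected_in_def grid_subst_def by blast
qed

lemma cross_edge_unique:
  assumes "x \<in> grid_subst m D C" "y \<in> grid_subst m D C"
    and "x' \<in> grid_subst m D C" "y' \<in> grid_subst m D C"
    and "grid_adj x y" "grid_adj x' y'"
    and "cell_block m x \<noteq> cell_block m y"
    and "cell_block m x' = cell_block m x" "cell_block m y' = cell_block m y"
  shows "x' = x \<and> y' = y"
proof -
  have m: "0 < m" using grid_labyrinth_pos[OF C] .
  have "cross_adj m (cell_block m x) (cell_offset m x) (cell_block m y) (cell_offset m y)"
    "cross_adj m (cell_block m x) (cell_offset m x') (cell_block m y) (cell_offset m y')"
    using grid_adj_block_cases[OF m assms(5)] grid_adj_block_cases[OF m assms(6)] assms(7-9) by auto
  moreover have "cell_offset m x \<in> C" "cell_offset m y \<in> C"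
    "cell_offset m x' \<in> C" "cell_offset m y' \<in> C"
    using assms(1-4) grid_subst_memD by blast+
  ultimately have "cell_offset m x' = cell_offset m x \<and> cell_offset m y' = cell_offset m y"
    using cross_adj_unique[OF C] by metis
  then show ?thesis using assms(8,9) subcell_block_offset by metis
qed

lemma cycle_in_one_block:
  assumes cs: "is_cycle grid_adj (grid_subst m D C) cs"
    and d: "\<And>e. e \<in> set cs \<Longrightarrow> cell_block m e = d"
  shows "is_cycle grid_adj C (map (cell_offset m) cs)"
proof (rule is_cycle_map[OF cs])
  have m: "0 < m" using grid_labyrinth_pos[OF C] .
  show "inj_on (cell_offset m) (set cs)"
    using d subcell_block_offset by (metis inj_onI)
  show "cell_offset m ` set cs \<subseteq> C"
    using cs grid_subst_memD by (auto simp: is_cycle_def)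
  show "grid_adj (cell_offset m x) (cell_offset m y)"
    if "x \<in> set cs" "y \<in> set cs" "grid_adj x y" for x y
    using grid_adj_block_cases[OF m \<open>grid_adj x y\<close>] d[OF that(1)] d[OF that(2)]
      cross_adj_grid_adj grid_adj_irrefl by metis
qed

text \<open>The closing edge of the cycle is the only edge between its two blocks, so the rest of the
  cycle projects to a walk in \<open>D\<close> between these blocks that avoids the edge joining them.\<close>
lemma cycle_across_blocks:
  assumes cs: "is_cycle grid_adj (grid_subst m D C) cs"
    and ends: "cell_block m (hd cs) \<noteq> cell_block m (last cs)"
  shows "has_cycle_in grid_adj D"
proof -
  let ?b = "cell_block m"
  define h l where "h = hd cs" and "l = last cs"
  have cs': "3 \<le> length cs" "distinct cs" "set cs \<subseteq> grid_subst m D C"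
    "successively grid_adj cs" "grid_adj l h"
    using cs by (auto simp: is_cycle_def h_def l_def)
  then have "cs \<noteq> []" by auto
  then have hl: "h \<in> set cs" "l \<in> set cs" by (auto simp: h_def l_def)
  have m: "0 < m" using grid_labyrinth_pos[OF C] .
  have "grid_adj (?b h) (?b l)"
    using grid_adj_block_cases[OF m grid_adj_sym[OF cs'(5)]] ends cross_adj_grid_adj
    by (auto simp: h_def l_def)
  have project: "?b x = ?b y \<or> grid_adj (?b x) (?b y) \<and> {?b x, ?b y} \<noteq> {?b h, ?b l}"
    if "x \<in> set cs" "y \<in> set cs" "grid_adj x y \<and> {x, y} \<noteq> {h, l}" for x y
  proof (cases "?b x = ?b y")
    case False
    have E: "x \<in> grid_subst m D C" "y \<in> grid_subst m D C"
      "h \<in> grid_subst m D C" "l \<in> grid_subst m D C"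
      using that hl cs'(3) by auto
    have "\<not> (?b x = ?b h \<and> ?b y = ?b l)"
      using cross_edge_unique[OF E(3,4,1,2) grid_adj_sym[OF cs'(5)]] that ends
      by (auto simp: h_def l_def)
    moreover have "\<not> (?b x = ?b l \<and> ?b y = ?b h)"
      using cross_edge_unique[OF E(4,3,1,2) cs'(5)] that ends
      by (auto simp: h_def l_def)
    moreover have "grid_adj (?b x) (?b y)"
      using grid_adj_block_cases[OF m, of x y] that False cross_adj_grid_adj by blast
    ultimately show ?thesis by (auto simp: doubleton_eq_iff)
  qed simp
  have "successively (\<lambda>x y. grid_adj x y \<and> {x, y} \<noteq> {h, l}) cs"
    using successively_not_hd_last[OF cs'(2,1)] cs'(4)
    unfolding h_def l_def successively_conv_nth by blast
  then have "successively (\<lambda>u v. u = v \<or> grid_adj u v \<and> {u, v} \<noteq> {?b h, ?b l}) (map ?b cs)"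
    unfolding successively_map by (rule successively_mono) (rule project)
  moreover have "set (map ?b cs) \<subseteq> D" using cs'(3) grid_subst_memD by auto
  ultimately show ?thesis
    using \<open>cs \<noteq> []\<close>
    by (intro walk_avoiding_edge_has_cycle[of grid_adj, OF grid_adj_sym \<open>grid_adj (?b h) (?b l)\<close>
        ends[folded h_def l_def]]) (simp_all add: h_def l_def hd_map last_map)
qed

lemma not_has_cycle_in_grid_subst: "\<not> has_cycle_in grid_adj (grid_subst m D C)"
proof
  assume "has_cycle_in grid_adj (grid_subst m D C)"
  then obtain cs where cs: "is_cycle grid_adj (grid_subst m D C) cs"
    by (auto simp: has_cycle_in_def)
  show False
  proof (cases "\<forall>e\<in>set cs. cell_block m e = cell_block m (hd cs)")
    case True
    then have "has_cycle_in grid_adj C"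
      using cycle_in_one_block[OF cs, of "cell_block m (hd cs)"] by (auto simp: has_cycle_in_def)
    then show False using grid_labyrinth_tree[OF C] by (simp add: grid_tree_def)
  next
    case False
    then obtain xs ys where "cs = xs @ ys" "xs \<noteq> []" "ys \<noteq> []"
      "cell_block m (last xs) \<noteq> cell_block m (hd ys)"
      using list_split_at_change[of cs] by blast
    then have "is_cycle grid_adj (grid_subst m D C) (ys @ xs)"
      "cell_block m (hd (ys @ xs)) \<noteq> cell_block m (last (ys @ xs))"
      using is_cycle_rotate cs by auto
    then have "has_cycle_in grid_adj D" by (rule cycle_across_blocks)
    then show False using grid_labyrinth_tree[OF D] by (simp add: grid_tree_def)
  qed
qed

lemma grid_labyrinth_grid_subst: "grid_labyrinth (M * m) (grid_subst m D C)"
proof -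
  have pos: "0 < m" "0 < M" using grid_labyrinth_pos C D by blast+
  have sub: "C \<subseteq> grid m" "D \<subseteq> grid M" using grid_labyrinth_subset C D by blast+
  have "finite (grid_subst m D C)"
    using grid_labyrinth_tree[OF C] grid_labyrinth_tree[OF D]
    by (simp add: grid_subst_eq_image grid_tree_def)
  moreover have "grid_subst m D C \<noteq> {}"
    using grid_labyrinth_tree[OF C] grid_labyrinth_tree[OF D]
    by (auto simp: grid_subst_eq_image grid_tree_def)
  ultimately have "grid_tree (grid_subst m D C)"
    using connected_in_grid_subst not_has_cycle_in_grid_subst by (simp add: grid_tree_def)
  moreover have "\<exists>!x. vertical_exit (M * m) (grid_subst m D C) x"
    using Ex1_div_mod[of "vertical_exit M D" "vertical_exit m C" m] C D
      vertical_exit_grid_subst_iff[OF sub(1) pos]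
    by (auto simp: grid_labyrinth_def vertical_exit_def grid_def)
  moreover have "\<exists>!y. horizontal_exit (M * m) (grid_subst m D C) y"
    using Ex1_div_mod[of "horizontal_exit M D" "horizontal_exit m C" m] C D
      horizontal_exit_grid_subst_iff[OF sub(1) pos]
    by (auto simp: grid_labyrinth_def horizontal_exit_def grid_def)
  moreover have "\<not> ((0, 0) \<in> grid_subst m D C \<and> (M * m - 1, M * m - 1) \<in> grid_subst m D C)"
    "\<not> ((M * m - 1, 0) \<in> grid_subst m D C \<and> (0, M * m - 1) \<in> grid_subst m D C)"
    using D pred_mult_div_mod[OF pos]
    by (auto simp: grid_labyrinth_def mem_grid_subst_iff[OF sub(1)] cell_block_def)
  moreover have "4 * 1 \<le> M * m"
    using C D by (intro mult_le_mono) (auto simp: grid_labyrinth_def)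
  ultimately show ?thesis
    using grid_subst_subset_grid[OF sub(2,1)] unfolding grid_labyrinth_def by simp
qed

end

primrec grid_white :: "nat \<Rightarrow> cell set \<Rightarrow> nat \<Rightarrow> cell set" where
  "grid_white m C 0 = C"
| "grid_white m C (Suc j) = grid_subst m (grid_white m C j) C"

lemma grid_labyrinth_grid_white:
  "grid_labyrinth m C \<Longrightarrow> grid_labyrinth (m ^ Suc j) (grid_white m C j)"
proof (induction j)
  case (Suc j)
  show ?case
    unfolding grid_white.simps power_Suc2[of m "Suc j"]
    using grid_labyrinth_grid_subst[OF Suc.prems Suc.IH[OF Suc.prems]] .
qed simp

section \<open>The grid chart of a convex quadrilateral\<close>

lemma comb_comb:
  "comb (comb Q p, comb Q q, comb Q r, comb Q t) (a1, a2, a3, a4) =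
    comb Q (a1 *\<^sub>R p + a2 *\<^sub>R q + a3 *\<^sub>R r + a4 *\<^sub>R t)"
  by (cases Q; cases p; cases q; cases r; cases t)
    (simp add: comb_def algebra_simps scaleR_add_right)

text \<open>The point \<open>(x, y)\<close> of \<open>[0, M]\<^sup>2\<close> is sent to \<open>comb Q (grid_weights M x y)\<close>. This chart is
  affine on the triangles \<open>y \<le> x\<close> and \<open>x \<le> y\<close>, which it maps onto \<open>\<Delta>\<^sub>1\<close> and \<open>\<Delta>\<^sub>2\<close>, and sends
  the corners \<open>(0, 0), (M, 0), (M, M), (0, M)\<close> to \<open>Q1, Q2, Q3, Q4\<close>.\<close>
definition grid_weights :: "nat \<Rightarrow> nat \<Rightarrow> nat \<Rightarrow> real \<times> real \<times> real \<times> real" where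
  "grid_weights M x y =
    ((real M - real (max x y)) / real M, (real x - real (min x y)) / real M,
     real (min x y) / real M, (real y - real (min x y)) / real M)"

lemma grid_weights_below:
  "y \<le> x \<Longrightarrow> grid_weights M x y = ((real M - real x) / M, (real x - real y) / M, real y / M, 0)"
  by (simp add: grid_weights_def max_def min_def)

lemma grid_weights_above:
  "x \<le> y \<Longrightarrow> grid_weights M x y = ((real M - real y) / M, 0, real x / M, (real y - real x) / M)"
  by (simp add: grid_weights_def max_def min_def)

text \<open>Each half of a grid cell lies in one of the two triangles on which the chart is affine, so
  the chart of the refined grid is that of the coarse grid composed with the charts of its cells.\<close>
lemma grid_weights_compose:
  fixes m M x y x' y' :: nat
  assumes "0 < m" "x < M" "y < M" "x' \<le> m" "y' \<le> m"
  shows "(case grid_weights m x' y' of (a1, a2, a3, a4) \<Rightarrow>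
      a1 *\<^sub>R grid_weights M x y + a2 *\<^sub>R grid_weights M (Suc x) y +
      a3 *\<^sub>R grid_weights M (Suc x) (Suc y) + a4 *\<^sub>R grid_weights M x (Suc y)) =
    grid_weights (M * m) (m * x + x') (m * y + y')"
proof -
  have le: "m * a + a' \<le> m * b + b'" if "a < b" "a' \<le> m" for a b a' b' :: nat
  proof -
    have "m * a + a' \<le> m * Suc a" using that by simp
    also have "\<dots> \<le> m * b" using that by (intro mult_le_mono2) simp
    finally show ?thesis by simp
  qed
  have pos: "real m > 0" "real M > 0" using assms by auto
  consider "x < y" | "y < x" | "x = y" "x' \<le> y'" | "x = y" "y' \<le> x'" by linarith
  then show ?thesis
  proof cases
    case 1
    then show ?thesis using le[OF 1 assms(4)] pos
      by (cases "x' \<le> y'") (simp_all add: grid_weights_above grid_weights_below field_simps)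
  next
    case 2
    then show ?thesis using le[OF 2 assms(5)] pos
      by (cases "x' \<le> y'") (simp_all add: grid_weights_above grid_weights_below field_simps)
  next
    case 3
    then show ?thesis using pos
      by (simp add: grid_weights_above field_simps)
  next
    case 4
    then show ?thesis using pos
      by (simp add: grid_weights_below field_simps)
  qed
qed

definition admissible_weights :: "real \<times> real \<times> real \<times> real \<Rightarrow> bool" where
  "admissible_weights a \<longleftrightarrow> (case a of (a1, a2, a3, a4) \<Rightarrow>
     0 \<le> a1 \<and> 0 \<le> a2 \<and> 0 \<le> a3 \<and> 0 \<le> a4 \<and> a1 + a2 + a3 + a4 = 1 \<and> (a2 = 0 \<or> a4 = 0))"

lemma admissible_grid_weights:
  assumes "0 < M" "x \<le> M" "y \<le> M"
  shows "admissible_weights (grid_weights M x y)"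
  using assms by (cases "x \<le> y")
    (auto simp: admissible_weights_def grid_weights_above grid_weights_below field_simps)

locale convex_quadrilateral =
  fixes Q1 Q2 Q3 Q4 :: pt
  assumes ccw: "convex_quad_ccw (Q1, Q2, Q3, Q4)"
begin

abbreviation Q :: quad where
  "Q \<equiv> (Q1, Q2, Q3, Q4)"

lemma cross2_diagonal_pos: "cross2 (Q2 - Q1) (Q3 - Q1) > 0" "cross2 (Q3 - Q1) (Q4 - Q1) > 0"
proof -
  have "cross2 (Q2 - Q1) (Q3 - Q2) = cross2 (Q2 - Q1) (Q3 - Q1)"
    "cross2 (Q4 - Q3) (Q1 - Q4) = cross2 (Q3 - Q1) (Q4 - Q1)"
    by (simp_all add: cross2_def algebra_simps)
  then show "cross2 (Q2 - Q1) (Q3 - Q1) > 0" "cross2 (Q3 - Q1) (Q4 - Q1) > 0"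
    using ccw by (auto simp: convex_quad_ccw_def)
qed

text \<open>The cross products of \<open>comb Q a - comb Q b\<close> with \<open>Q3 - Q1\<close> and with \<open>Q2 - Q1\<close>.\<close>
lemma comb_eq_cross_equations:
  assumes "comb Q (a1, a2, a3, a4) = comb Q (b1, b2, b3, b4)"
    and "a1 + a2 + a3 + a4 = b1 + b2 + b3 + b4"
  shows "(a2 - b2) * cross2 (Q2 - Q1) (Q3 - Q1) = (a4 - b4) * cross2 (Q3 - Q1) (Q4 - Q1)"
    and "(a3 - b3) * cross2 (Q2 - Q1) (Q3 - Q1) + (a4 - b4) * cross2 (Q2 - Q1) (Q4 - Q1) = 0"
proof -
  define p where "p i = (a2 - b2) * (Q2 $ i - Q1 $ i) + (a3 - b3) * (Q3 $ i - Q1 $ i)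
    + (a4 - b4) * (Q4 $ i - Q1 $ i)" for i
  have "p i = comb Q (a1, a2, a3, a4) $ i - comb Q (b1, b2, b3, b4) $ i
      - ((a1 + a2 + a3 + a4) - (b1 + b2 + b3 + b4)) * Q1 $ i" for i
    by (simp add: p_def comb_def algebra_simps)
  then have "p 1 = 0" "p 2 = 0" using assms by simp_all
  moreover have "(a2 - b2) * cross2 (Q2 - Q1) (Q3 - Q1) - (a4 - b4) * cross2 (Q3 - Q1) (Q4 - Q1)
      = p 1 * (Q3 $ 2 - Q1 $ 2) - p 2 * (Q3 $ 1 - Q1 $ 1)"
    "(a3 - b3) * cross2 (Q2 - Q1) (Q3 - Q1) + (a4 - b4) * cross2 (Q2 - Q1) (Q4 - Q1)
      = p 2 * (Q2 $ 1 - Q1 $ 1) - p 1 * (Q2 $ 2 - Q1 $ 2)"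
    by (simp_all add: p_def cross2_def algebra_simps)
  ultimately show "(a2 - b2) * cross2 (Q2 - Q1) (Q3 - Q1) = (a4 - b4) * cross2 (Q3 - Q1) (Q4 - Q1)"
    "(a3 - b3) * cross2 (Q2 - Q1) (Q3 - Q1) + (a4 - b4) * cross2 (Q2 - Q1) (Q4 - Q1) = 0"
    by simp_all
qed

lemma comb_inj:
  assumes "admissible_weights a" "admissible_weights b" and "comb Q a = comb Q b"
  shows "a = b"
proof -
  obtain a1 a2 a3 a4 b1 b2 b3 b4 where ab: "a = (a1, a2, a3, a4)" "b = (b1, b2, b3, b4)"
    by (cases a; cases b) auto
  have A: "0 \<le> a2" "0 \<le> a4" "a1 + a2 + a3 + a4 = 1" "a2 = 0 \<or> a4 = 0"
    and B: "0 \<le> b2" "0 \<le> b4" "b1 + b2 + b3 + b4 = 1" "b2 = 0 \<or> b4 = 0"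
    using assms(1,2) by (auto simp: ab admissible_weights_def)
  note X = cross2_diagonal_pos(1) and Y = cross2_diagonal_pos(2)
  note eqs = comb_eq_cross_equations[OF assms(3)[unfolded ab]]
  have "a2 = b2 \<and> a4 = b4"
  proof -
    have "a2 * cross2 (Q2 - Q1) (Q3 - Q1) + b4 * cross2 (Q3 - Q1) (Q4 - Q1) = 0"
      if "a4 = 0" "b2 = 0"
      using eqs(1) A(3) B(3) that by (simp add: algebra_simps)
    moreover have "b2 * cross2 (Q2 - Q1) (Q3 - Q1) + a4 * cross2 (Q3 - Q1) (Q4 - Q1) = 0"
      if "a2 = 0" "b4 = 0"
      using eqs(1) A(3) B(3) that by (simp add: algebra_simps)
    ultimately show ?thesis
      using A B X Y eqs(1) by (auto simp: add_nonneg_eq_0_iff)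
  qed
  moreover from this have "a3 = b3" using eqs(2) X A(3) B(3) by simp
  ultimately show ?thesis using A(3) B(3) ab by simp
qed

lemma quad_coords_comb:
  assumes "admissible_weights a"
  shows "quad_coords Q (comb Q a) = a"
proof -
  obtain a1 a2 a3 a4 where a: "a = (a1, a2, a3, a4)" by (cases a) auto
  have A: "0 \<le> a1" "0 \<le> a2" "0 \<le> a3" "0 \<le> a4" "a1 + a2 + a3 + a4 = 1" "a2 = 0 \<or> a4 = 0"
    using assms by (auto simp: a admissible_weights_def)
  have the_eq: "(THE b. P b) = a"
    if "P a" "\<And>b. P b \<Longrightarrow> admissible_weights b \<and> comb Q a = comb Q b" for P
    using that assms comb_inj by (metis the_equality)
  have hull: "comb Q a \<in> convex hull {Q1, Q2, Q3} \<longleftrightarrow> a4 = 0"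
  proof
    assume "comb Q a \<in> convex hull {Q1, Q2, Q3}"
    then obtain u v w where "0 \<le> u" "0 \<le> v" "0 \<le> w" "u + v + w = 1"
      "comb Q a = comb Q (u, v, w, 0)"
      unfolding convex_hull_3 by (auto simp: comb_def)
    then have "a = (u, v, w, 0)"
      using comb_inj[OF assms] by (simp add: admissible_weights_def)
    then show "a4 = 0" using a by simp
  next
    assume "a4 = 0"
    then have "comb Q a = a1 *\<^sub>R Q1 + a2 *\<^sub>R Q2 + a3 *\<^sub>R Q3" by (simp add: a comb_def)
    then show "comb Q a \<in> convex hull {Q1, Q2, Q3}"
      unfolding convex_hull_3 using A \<open>a4 = 0\<close> by fastforce
  qed
  show ?thesis
  proof (cases "a4 = 0")
    case True
    show ?thesis
      unfolding quad_coords_def prod.case if_P[OF hull[THEN iffD2, OF True]]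
      by (rule the_eq) (use A True in \<open>auto simp: a admissible_weights_def split: prod.splits\<close>)
  next
    case False
    show ?thesis
      unfolding quad_coords_def prod.case hull if_not_P[OF False]
      by (rule the_eq) (use A False in \<open>auto simp: a admissible_weights_def split: prod.splits\<close>)
  qed
qed

lemma PV_comb: "admissible_weights a \<Longrightarrow> PV Q V (comb Q a) = comb V a"
  by (simp add: PV_def quad_coords_comb)

end

definition grid_point :: "quad \<Rightarrow> nat \<Rightarrow> nat \<Rightarrow> nat \<Rightarrow> pt" where
  "grid_point Q M x y = comb Q (grid_weights M x y)"

definition grid_quad :: "quad \<Rightarrow> nat \<Rightarrow> cell \<Rightarrow> quad" where
  "grid_quad Q M c =
    (grid_point Q M (fst c) (snd c), grid_point Q M (Suc (fst c)) (snd c),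
     grid_point Q M (Suc (fst c)) (Suc (snd c)), grid_point Q M (fst c) (Suc (snd c)))"

definition index_cell :: "idx \<Rightarrow> cell" where
  "index_cell k = (case k of (k1, k2, k3, k4) \<Rightarrow> (k2 + k3, k3 + k4))"

lemma Sq_eq_grid_quad:
  assumes "k \<in> Aidx M" and "0 < M"
  shows "Sq Qv M k = grid_quad Qv M (index_cell k)"
proof -
  obtain k1 k2 k3 k4 where k: "k = (k1, k2, k3, k4)" by (cases k) auto
  have M: "real M \<noteq> 0" using assms(2) by simp
  consider (A1) "k \<in> A1 M" | (A2) "k \<notin> A1 M" "k \<in> A2 M"
    | (A3) "k \<notin> A1 M" "k \<notin> A2 M"
    using assms(1) unfolding Aidx_def by blast
  then show ?thesis
  proof cases
    case A1
    then have "k4 = 0" "k2 \<noteq> 0" "real M = real k1 + real k2 + real k3 + 1"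
      using assms(2) by (auto simp: k A1_def)
    then show ?thesis
      using M unfolding k Sq_def Let_def prod.case if_P[OF A1[unfolded k]]
      by (simp add: index_cell_def grid_quad_def grid_point_def grid_weights_below field_simps)
  next
    case A2
    then have "k2 = 0" "k4 \<noteq> 0" "real M = real k1 + real k3 + real k4 + 1"
      using assms(2) by (auto simp: k A2_def)
    then show ?thesis
      using M unfolding k Sq_def Let_def prod.case
        if_not_P[OF A2(1)[unfolded k]] if_P[OF A2(2)[unfolded k]]
      by (simp add: index_cell_def grid_quad_def grid_point_def grid_weights_above field_simps)
  next
    case A3
    then have "k2 = 0" "k4 = 0" "real M = real k1 + real k3 + 1"
      using assms by (auto simp: k Aidx_def A3_def)
    then show ?thesis
      using M unfolding k Sq_def Let_def prod.case
        if_not_P[OF A3(1)[unfolded k]] if_not_P[OF A3(2)[unfolded k]]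
      by (simp add: index_cell_def grid_quad_def grid_point_def
          grid_weights_above grid_weights_below field_simps)
  qed
qed

lemma index_cell_image: "0 < M \<Longrightarrow> index_cell ` Aidx M = grid M"
proof
  assume M: "0 < M"
  show "index_cell ` Aidx M \<subseteq> grid M"
    using M by (auto simp: index_cell_def Aidx_def A1_def A2_def A3_def grid_def)
  show "grid M \<subseteq> index_cell ` Aidx M"
  proof
    fix c assume "c \<in> grid M"
    then obtain x y where c: "c = (x, y)" "x < M" "y < M" by (auto simp: grid_def)
    consider "y < x" | "x < y" | "x = y" by linarith
    then have "\<exists>k\<in>Aidx M. index_cell k = c"
    proof cases
      case 1
      then show ?thesis using c
        by (intro bexI[of _ "(M - 1 - x, x - y, y, 0)"]) (auto simp: index_cell_def Aidx_def A1_def)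
    next
      case 2
      then show ?thesis using c
        by (intro bexI[of _ "(M - 1 - y, 0, x, y - x)"]) (auto simp: index_cell_def Aidx_def A2_def)
    next
      case 3
      then show ?thesis using c
        by (intro bexI[of _ "(M - 1 - x, 0, x, 0)"]) (auto simp: index_cell_def Aidx_def A3_def)
    qed
    then show "c \<in> index_cell ` Aidx M" by blast
  qed
qed

lemma Sset_eq_grid_quad_image: "0 < M \<Longrightarrow> Sset Qv M = grid_quad Qv M ` grid M"
  unfolding Sset_def index_cell_image[symmetric] image_image
  by (intro image_cong) (simp_all add: Sq_eq_grid_quad)

lemma Ex1_pair_sum_iff:
  fixes N :: nat
  assumes "\<And>x. P x \<Longrightarrow> x \<le> N"
  shows "(\<exists>!p. case p of (a, b) \<Rightarrow> a + b = N \<and> P b) \<longleftrightarrow> (\<exists>!x. P x)"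
proof
  assume "\<exists>!p. case p of (a, b) \<Rightarrow> a + b = N \<and> P b"
  then obtain p0 where p0: "case p0 of (a, b) \<Rightarrow> a + b = N \<and> P b"
    and uniq: "\<And>p. (case p of (a, b) \<Rightarrow> a + b = N \<and> P b) \<Longrightarrow> p = p0"
    by blast
  obtain a b where ab: "p0 = (a, b)" by (cases p0)
  show "\<exists>!x. P x"
  proof (rule ex1I[of _ b])
    show "P b" using p0 ab by simp
    show "x = b" if "P x" for x
      using uniq[of "(N - x, x)"] that assms[OF that] ab by simp
  qed
next
  assume "\<exists>!x. P x"
  then obtain b where "P b" and uniq: "\<And>x. P x \<Longrightarrow> x = b" by blast
  show "\<exists>!p. case p of (a, b) \<Rightarrow> a + b = N \<and> P b"
  proof (rule ex1I[of _ "(N - b, b)"])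
    show "case (N - b, b) of (a, b) \<Rightarrow> a + b = N \<and> P b"
      using \<open>P b\<close> assms[OF \<open>P b\<close>] by simp
    show "p = (N - b, b)" if "case p of (a, b) \<Rightarrow> a + b = N \<and> P b" for p
      using that uniq by (cases p) auto
  qed
qed

context convex_quadrilateral
begin

lemma grid_point_eq_iff:
  assumes "0 < M" "x \<le> M" "y \<le> M" "x' \<le> M" "y' \<le> M"
  shows "grid_point Q M x y = grid_point Q M x' y' \<longleftrightarrow> x = x' \<and> y = y'"
proof
  assume "grid_point Q M x y = grid_point Q M x' y'"
  then have "grid_weights M x y = grid_weights M x' y'"
    using comb_inj admissible_grid_weights assms unfolding grid_point_def by blast
  then have "real x - real (min x y) = real x' - real (min x' y')" "min x y = min x' y'"
    "real y - real (min x y) = real y' - real (min x' y')"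
    using assms(1) by (auto simp: grid_weights_def divide_cancel_right)
  then show "x = x' \<and> y = y'" by linarith
qed simp

lemma PV_grid_point:
  assumes "0 < m" "x < M" "y < M" "x' \<le> m" "y' \<le> m"
  shows "PV Q (grid_quad Q M (x, y)) (grid_point Q m x' y') =
    grid_point Q (M * m) (m * x + x') (m * y + y')"
  using assms grid_weights_compose[OF assms]
  by (simp add: grid_point_def grid_quad_def PV_comb admissible_grid_weights comb_comb
      split: prod.splits)

lemma quad_map_grid_quad:
  assumes "d \<in> grid M" "c \<in> grid m"
  shows "quad_map Q (grid_quad Q M d) (grid_quad Q m c) = grid_quad Q (M * m) (subcell m d c)"
proof -
  obtain x y x' y' where dc: "d = (x, y)" "c = (x', y')" and "x < M" "y < M" "x' < m" "y' < m"
    using assms by (auto simp: grid_def)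
  then have "0 < m" "x' \<le> m" "y' \<le> m" "Suc x' \<le> m" "Suc y' \<le> m" by auto
  note PV = PV_grid_point[OF \<open>0 < m\<close> \<open>x < M\<close> \<open>y < M\<close>]
  show ?thesis
    using PV[of x' y'] PV[of "Suc x'" y'] PV[of "Suc x'" "Suc y'"] PV[of x' "Suc y'"]
      \<open>x' \<le> m\<close> \<open>y' \<le> m\<close> \<open>Suc x' \<le> m\<close> \<open>Suc y' \<le> m\<close>
    by (simp add: dc quad_map_def grid_quad_def subcell_def)
qed

lemma inj_on_grid_quad: "inj_on (grid_quad Q M) (grid M)"
proof (rule inj_onI)
  fix c d assume "c \<in> grid M" "d \<in> grid M" "grid_quad Q M c = grid_quad Q M d"
  then show "c = d"
    using grid_point_eq_iff[of M "fst c" "snd c" "fst d" "snd d"]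
    by (auto simp: grid_quad_def grid_def prod_eq_iff)
qed

lemma adj_grid_quad_iff:
  assumes "c \<in> grid M" "d \<in> grid M"
  shows "adj (grid_quad Q M c) (grid_quad Q M d) \<longleftrightarrow> grid_adj c d"
proof -
  obtain x y x' y' where cd: "c = (x, y)" "d = (x', y')" and "x < M" "y < M" "x' < M" "y' < M"
    using assms by (auto simp: grid_def)
  then have bounds: "x \<le> M" "y \<le> M" "x' \<le> M" "y' \<le> M"
    "Suc x \<le> M" "Suc y \<le> M" "Suc x' \<le> M" "Suc y' \<le> M" by auto
  have "sides (grid_quad Q M c) \<inter> sides (grid_quad Q M d) \<noteq> {} \<longleftrightarrow> c = d \<or> grid_adj c d"
    unfolding cd sides_def grid_quad_def grid_adj_def using bounds \<open>x < M\<close>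
    by (simp add: doubleton_eq_iff grid_point_eq_iff) auto
  moreover have "grid_quad Q M c = grid_quad Q M d \<longleftrightarrow> c = d"
    using inj_on_grid_quad assms by (auto dest: inj_onD)
  ultimately show ?thesis
    unfolding adj_def using grid_adj_irrefl by blast
qed

lemma Sq_mem_grid_quad_image_iff:
  assumes "0 < M" "C \<subseteq> grid M" and "k \<in> Aidx M"
  shows "Sq Q M k \<in> grid_quad Q M ` C \<longleftrightarrow> index_cell k \<in> C"
proof -
  have "index_cell k \<in> grid M" using assms(1,3) index_cell_image by blast
  then show ?thesis
    using assms by (simp add: Sq_eq_grid_quad inj_on_image_mem_iff[OF inj_on_grid_quad])
qed

lemma exit_property_grid_quad_iff:
  assumes "0 < M" "C \<subseteq> grid M"
  shows "exit_property Q M (grid_quad Q M ` C) \<longleftrightarrow>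
    (\<exists>!x. vertical_exit M C x) \<and> (\<exists>!y. horizontal_exit M C y)"
proof -
  let ?W = "grid_quad Q M ` C"
  have "(k1, k2, 0, 0) \<in> Aidx M \<and> Sq Q M (k1, k2, 0, 0) \<in> ?W \<and> Sq Q M (0, 0, k2, k1) \<in> ?W \<longleftrightarrow>
      k1 + k2 = M - 1 \<and> vertical_exit M C k2" for k1 k2
  proof (cases "k1 + k2 = M - 1")
    case True
    then have "(k1, k2, 0, 0) \<in> Aidx M" "(0, 0, k2, k1) \<in> Aidx M"
      by (auto simp: Aidx_def A1_def A2_def A3_def)
    then show ?thesis
      using True
      by (simp add: Sq_mem_grid_quad_image_iff[OF assms] index_cell_def vertical_exit_def
          add.commute)
  qed (auto simp: Aidx_def A1_def A2_def A3_def)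
  moreover have "(k1, 0, 0, k4) \<in> Aidx M \<and> Sq Q M (k1, 0, 0, k4) \<in> ?W \<and> Sq Q M (0, k1, k4, 0) \<in> ?W \<longleftrightarrow>
      k1 + k4 = M - 1 \<and> horizontal_exit M C k4" for k1 k4
  proof (cases "k1 + k4 = M - 1")
    case True
    then have "(k1, 0, 0, k4) \<in> Aidx M" "(0, k1, k4, 0) \<in> Aidx M"
      by (auto simp: Aidx_def A1_def A2_def A3_def)
    then show ?thesis
      using True
      by (simp add: Sq_mem_grid_quad_image_iff[OF assms] index_cell_def horizontal_exit_def)
  qed (auto simp: Aidx_def A1_def A2_def A3_def)
  moreover have "x \<le> M - 1" if "vertical_exit M C x \<or> horizontal_exit M C x" for x
    using that assms(2) by (auto simp: vertical_exit_def horizontal_exit_def grid_def)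
  ultimately show ?thesis
    unfolding exit_property_def
    using Ex1_pair_sum_iff[of "vertical_exit M C" "M - 1"]
      Ex1_pair_sum_iff[of "horizontal_exit M C" "M - 1"]
    by simp
qed

lemma corner_property_grid_quad_iff:
  assumes "0 < M" "C \<subseteq> grid M"
  shows "corner_property Q M (grid_quad Q M ` C) \<longleftrightarrow>
    \<not> ((0, 0) \<in> C \<and> (M - 1, M - 1) \<in> C) \<and> \<not> ((M - 1, 0) \<in> C \<and> (0, M - 1) \<in> C)"
proof -
  have "(M - 1, 0, 0, 0) \<in> Aidx M" "(0, 0, M - 1, 0) \<in> Aidx M"
    "(0, M - 1, 0, 0) \<in> Aidx M" "(0, 0, 0, M - 1) \<in> Aidx M"
    using assms(1) by (auto simp: Aidx_def A1_def A2_def A3_def)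
  then show ?thesis
    by (simp add: corner_property_def Sq_mem_grid_quad_image_iff[OF assms] index_cell_def)
qed

lemma labyrinth_set_grid_quad_iff:
  assumes "C \<subseteq> grid M"
  shows "labyrinth_set Q M (grid_quad Q M ` C) \<longleftrightarrow> grid_labyrinth M C"
proof (cases "4 \<le> M")
  case True
  then have M: "0 < M" by simp
  have inj: "inj_on (grid_quad Q M) C"
    using inj_on_grid_quad assms by (rule inj_on_subset)
  have adj: "adj (grid_quad Q M c) (grid_quad Q M d) \<longleftrightarrow> grid_adj c d" if "c \<in> C" "d \<in> C" for c d
    using adj_grid_quad_iff assms that by blast
  have "is_tree (grid_quad Q M ` C) \<longleftrightarrow> grid_tree C"
    by (simp add: is_tree_def grid_tree_def graph_connected_iff has_cycle_iff
        finite_image_iff[OF inj] connected_in_image_iff[of _ _ adj, OF inj adj]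
        has_cycle_in_image_iff[of _ _ adj, OF inj adj])
  moreover have "grid_quad Q M ` C \<subseteq> Sset Q M"
    using assms Sset_eq_grid_quad_image[OF M] by auto
  ultimately show ?thesis
    using True assms
    by (simp add: labyrinth_set_def grid_labyrinth_def exit_property_grid_quad_iff[OF M assms]
        corner_property_grid_quad_iff[OF M assms])
qed (simp add: labyrinth_set_def grid_labyrinth_def)

lemma white_aux_grid_quad:
  assumes "grid_labyrinth m C"
  shows "white_aux Q (grid_quad Q m ` C) j = grid_quad Q (m ^ Suc j) ` grid_white m C j"
proof (induction j)
  case (Suc j)
  let ?M = "m ^ Suc j" and ?D = "grid_white m C j"
  have grids: "?D \<subseteq> grid ?M" "C \<subseteq> grid m"
    using grid_labyrinth_subset grid_labyrinth_grid_white assms by blast+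
  have "white_aux Q (grid_quad Q m ` C) (Suc j) =
      (\<lambda>(d, c). quad_map Q (grid_quad Q ?M d) (grid_quad Q m c)) ` (?D \<times> C)"
    unfolding white_aux.simps Suc.IH by fastforce
  also have "\<dots> = (\<lambda>(d, c). grid_quad Q (?M * m) (subcell m d c)) ` (?D \<times> C)"
    using grids by (intro image_cong) (auto intro!: quad_map_grid_quad)
  also have "\<dots> = grid_quad Q (m ^ Suc (Suc j)) ` grid_white m C (Suc j)"
    unfolding grid_white.simps grid_subst_eq_image power_Suc2[of m "Suc j"]
    by (simp add: image_image case_prod_beta)
  finally show ?case .
qed simp

end

theorem proposition3p2:
  fixes Q1 Q2 Q3 Q4 :: "real^2" and m n :: nat and W1 :: "quad set"
  assumes "convex_quad_ccw (Q1,Q2,Q3,Q4)"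
    and "dist Q1 Q3 \<le> dist Q2 Q4"
    and "m \<ge> 4"
    and "labyrinth_set (Q1,Q2,Q3,Q4) m W1"
    and "n \<ge> 1"
  shows "labyrinth_set (Q1,Q2,Q3,Q4) (m ^ n) (white (Q1,Q2,Q3,Q4) W1 n)"
proof -
  \<comment> \<open>The diagonal condition only fixes the labelling of the vertices.\<close>
  interpret convex_quadrilateral Q1 Q2 Q3 Q4
    using assms(1) by unfold_locales
  define C where "C = {c \<in> grid m. grid_quad Q m c \<in> W1}"
  have "W1 \<subseteq> grid_quad Q m ` grid m"
    using assms(3,4) Sset_eq_grid_quad_image[of m Q] by (simp add: labyrinth_set_def)
  then have W1: "W1 = grid_quad Q m ` C" by (auto simp: C_def)
  have "C \<subseteq> grid m" by (auto simp: C_def)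
  then have C: "grid_labyrinth m C"
    using assms(4) labyrinth_set_grid_quad_iff W1 by blast
  obtain j where n: "n = Suc j" using assms(5) by (cases n) auto
  have lab: "grid_labyrinth (m ^ n) (grid_white m C j)"
    using grid_labyrinth_grid_white[OF C] by (simp add: n)
  have "white Q W1 n = grid_quad Q (m ^ n) ` grid_white m C j"
    using white_aux_grid_quad[OF C] by (simp add: white_def W1 n)
  then show ?thesis
    using labyrinth_set_grid_quad_iff[OF grid_labyrinth_subset[OF lab]] lab by simp
qed

end
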